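(* Let $\mathcal{A} = \langle \Sigma, Q, \Delta, q_0\rangle$ be a substochastic automaton and $K$ a regular language over $Q \times \Sigma \times Q$ accepted by a deterministic finite automaton $\mathcal{K}=\langle Q \times \Sigma \times Q, Q_K, \Delta_K, q_K, F\rangle$. Then $\mathbf{P}_\mathcal{A}(K) = L^{\mathcal{A} \| \mathcal{K}}_{(q_0, q_K)}$.
   Context: A substochastic automaton (SA) is a tuple $\langle \Sigma, Q, \Delta, q_0\rangle$ with $\Sigma$ a finite alphabet, $Q$ a finite set of states, $q_0$ the initial state and $\Delta: Q \to ((\Sigma\times Q)\uplus\{\mathrm{stop}\}\to[0,1])$, where $\mathrm{stop}$ is a special termination action, such that $\sum_x \Delta(q)(x) \le 1$ for every $q$. A complete run from $q$ is a finite sequence $q \xrightarrow{a_1} q_1 \cdots \xrightarrow{a_n} q_n\,\mathrm{stop}$ of positive-probability transitions followed by termination; $CRun_q(\mathcal{A})$ denotes the set of complete runs from $q$ and $CRun(\mathcal{A}) = CRun_{q_0}(\mathcal{A})$. The weight of a complete run is $\mathbf{P}_\mathcal{A}(q\,\mathrm{stop}) = \Delta(q)(\mathrm{stop})$ and $\mathbf{P}_\mathcal{A}(q\xrightarrow{a}\rho) = \Delta(q)(a,r)\cdot\mathbf{P}_\mathcal{A}(\rho)$ with $r$ the first state of $\rho$. For an SA $\mathcal{B}$ and state $q$, $L^{\mathcal{B}}_q = \mathbf{P}_{\mathcal{B}}(CRun_q(\mathcal{B}))$. $\mathbf{P}_\mathcal{A}(K)$ is the sum of $\mathbf{P}_\mathcal{A}(\rho)$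 over complete runs $\rho\in CRun(\mathcal{A})$ whose sequence of transitions $(q_{i-1},a_i,q_i)$ forms a word in $K$. The synchronized product $\mathcal{A}\|\mathcal{K}$ is the SA $\langle \Sigma, Q\times Q_K, \Delta', (q_0,q_K)\rangle$ where, for $\mu = \Delta(q_1)$, $\Delta'(q_1,r_1) = \nu$ with $\nu(a,(q_2,r_2)) = \mu(a,q_2)$ if $r_1 \xrightarrow{(q_1,a,q_2)} r_2 \in \Delta_K$ and $0$ otherwise, and $\nu(\mathrm{stop}) = \mu(\mathrm{stop})$ if $r_1\in F$ and $0$ otherwise. *)

theory Defs
  imports "HOL-Analysis.Analysis"
begin

text \<open>The transition function Delta maps a state q to a function on actions, i.e. on
  (Sigma x Q) disjoint-union {stop}.\<close>
datatype ('s, 'q) act = Stop | Go 's 'q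

definition is_SA :: "'s set \<Rightarrow> 'q set \<Rightarrow> ('q \<Rightarrow> ('s, 'q) act \<Rightarrow> real) \<Rightarrow> 'q \<Rightarrow> bool" where
  "is_SA Sig Q Delta q0 \<longleftrightarrow>
     finite Sig \<and> finite Q \<and> q0 \<in> Q \<and>
     (\<forall>q\<in>Q.
        (\<forall>x. 0 \<le> Delta q x \<and> Delta q x \<le> 1) \<and>
        (\<forall>a r. (a \<notin> Sig \<or> r \<notin> Q) \<longrightarrow> Delta q (Go a r) = 0) \<and>
        Delta q Stop + (\<Sum>(a, r)\<in>Sig \<times> Q. Delta q (Go a r)) \<le> 1)"

text \<open>A run from q is represented by the list of steps (a_1,q_1),...,(a_n,q_n).\<close>
fun pos_path :: "('q \<Rightarrow> ('s, 'q) act \<Rightarrow> real) \<Rightarrow> 'q \<Rightarrow> ('s \<times> 'q) list \<Rightarrow> bool" where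
  "pos_path Delta q [] = True"
| "pos_path Delta q ((a, r) # xs) = (Delta q (Go a r) > 0 \<and> pos_path Delta r xs)"

fun end_state :: "'q \<Rightarrow> ('s \<times> 'q) list \<Rightarrow> 'q" where
  "end_state q [] = q"
| "end_state q ((a, r) # xs) = end_state r xs"

definition CRun :: "('q \<Rightarrow> ('s, 'q) act \<Rightarrow> real) \<Rightarrow> 'q \<Rightarrow> ('s \<times> 'q) list set" where
  "CRun Delta q = {xs. pos_path Delta q xs \<and> Delta (end_state q xs) Stop > 0}"

fun run_weight :: "('q \<Rightarrow> ('s, 'q) act \<Rightarrow> real) \<Rightarrow> 'q \<Rightarrow> ('s \<times> 'q) list \<Rightarrow> real" where
  "run_weight Delta q [] = Delta q Stop"
| "run_weight Delta q ((a, r) # xs) = Delta q (Go a r) * run_weight Delta r xs"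

fun trans_word :: "'q \<Rightarrow> ('s \<times> 'q) list \<Rightarrow> ('q \<times> 's \<times> 'q) list" where
  "trans_word q [] = []"
| "trans_word q ((a, r) # xs) = (q, a, r) # trans_word r xs"

definition L_SA :: "('q \<Rightarrow> ('s, 'q) act \<Rightarrow> real) \<Rightarrow> 'q \<Rightarrow> real" where
  "L_SA Delta q = (\<Sum>\<^sub>\<infinity>xs\<in>CRun Delta q. run_weight Delta q xs)"

definition P_lang :: "('q \<Rightarrow> ('s, 'q) act \<Rightarrow> real) \<Rightarrow> 'q \<Rightarrow> ('q \<times> 's \<times> 'q) list set \<Rightarrow> real" where
  "P_lang Delta q0 K = (\<Sum>\<^sub>\<infinity>xs\<in>{xs \<in> CRun Delta q0. trans_word q0 xs \<in> K}. run_weight Delta q0 xs)"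

definition is_DFA :: "'x set \<Rightarrow> 'k set \<Rightarrow> ('k \<times> 'x \<times> 'k) set \<Rightarrow> 'k \<Rightarrow> 'k set \<Rightarrow> bool" where
  "is_DFA Alph QK DK qK F \<longleftrightarrow>
     finite Alph \<and> finite QK \<and> qK \<in> QK \<and> F \<subseteq> QK \<and> DK \<subseteq> QK \<times> Alph \<times> QK \<and>
     (\<forall>r x r1 r2. (r, x, r1) \<in> DK \<longrightarrow> (r, x, r2) \<in> DK \<longrightarrow> r1 = r2)"

fun dfa_steps :: "('k \<times> 'x \<times> 'k) set \<Rightarrow> 'k \<Rightarrow> 'x list \<Rightarrow> 'k \<Rightarrow> bool" where
  "dfa_steps DK r [] r' = (r' = r)"
| "dfa_steps DK r (x # w) r' = (\<exists>r1. (r, x, r1) \<in> DK \<and> dfa_steps DK r1 w r')"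

definition dfa_lang :: "('k \<times> 'x \<times> 'k) set \<Rightarrow> 'k \<Rightarrow> 'k set \<Rightarrow> 'x list set" where
  "dfa_lang DK qK F = {w. \<exists>r\<in>F. dfa_steps DK qK w r}"

fun prod_delta :: "('q \<Rightarrow> ('s, 'q) act \<Rightarrow> real) \<Rightarrow> ('k \<times> ('q \<times> 's \<times> 'q) \<times> 'k) set \<Rightarrow> 'k set
                   \<Rightarrow> ('q \<times> 'k) \<Rightarrow> ('s, 'q \<times> 'k) act \<Rightarrow> real" where
  "prod_delta Delta DK F (q1, r1) Stop = (if r1 \<in> F then Delta q1 Stop else 0)"
| "prod_delta Delta DK F (q1, r1) (Go a (q2, r2)) =
     (if (r1, (q1, a, q2), r2) \<in> DK then Delta q1 (Go a q2) else 0)"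

end

theory Submission
  imports Defs
begin

text \<open>A run of the product \<open>\<A> \<parallel> \<K>\<close> from \<open>(q, r)\<close> is a run of \<open>\<A>\<close> from \<open>q\<close> decorated with the
  states that \<open>\<K>\<close> passes through while reading its transition word. Forgetting the decoration
  maps the complete runs of the product onto the complete runs of \<open>\<A>\<close> whose word is accepted
  by \<open>\<K>\<close>; it preserves weights, and it is injective because \<open>\<K>\<close> is deterministic. Hence the
  two sums are the same sum, reindexed.\<close>

definition strip_dfa_states :: "('s \<times> ('q \<times> 'k)) list \<Rightarrow> ('s \<times> 'q) list" where
  "strip_dfa_states = map (\<lambda>(a, (q, r)). (a, q))"

lemma strip_dfa_states_simps [simp]:
  "strip_dfa_states [] = []"
  "strip_dfa_states ((a, (q, r)) # ys) = (a, q) # strip_dfa_states ys"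
  by (simp_all add: strip_dfa_states_def)

lemma strip_dfa_states_eq_Nil_iff [simp]:
  "strip_dfa_states ys = [] \<longleftrightarrow> ys = []" "[] = strip_dfa_states ys \<longleftrightarrow> ys = []"
  by (auto simp: strip_dfa_states_def)

lemma fst_end_state_strip_dfa_states:
  "fst (end_state (q, r) ys) = end_state q (strip_dfa_states ys)"
  by (induction ys arbitrary: q r) auto

lemma pos_path_strip_dfa_states:
  "pos_path (prod_delta Delta DK F) (q, r) ys \<Longrightarrow> pos_path Delta q (strip_dfa_states ys)"
  by (induction ys arbitrary: q r) (auto split: if_splits)

lemma dfa_steps_trans_word_strip_dfa_states:
  "pos_path (prod_delta Delta DK F) (q, r) ys \<Longrightarrow>
     dfa_steps DK r (trans_word q (strip_dfa_states ys)) (snd (end_state (q, r) ys))"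
  by (induction ys arbitrary: q r) (auto split: if_splits intro!: exI)

lemma run_weight_prod_delta:
  "pos_path (prod_delta Delta DK F) (q, r) ys \<Longrightarrow>
     run_weight (prod_delta Delta DK F) (q, r) ys =
       (if snd (end_state (q, r) ys) \<in> F then run_weight Delta q (strip_dfa_states ys) else 0)"
  by (induction ys arbitrary: q r) (auto split: if_splits)

lemma lift_pos_path_prod_delta:
  assumes "pos_path Delta q xs" and "dfa_steps DK r (trans_word q xs) r'"
  obtains ys where "pos_path (prod_delta Delta DK F) (q, r) ys" "strip_dfa_states ys = xs"
    "end_state (q, r) ys = (end_state q xs, r')"
  using assms
proof (induction xs arbitrary: q r thesis)
  case Nil
  then show ?case by auto
next
  case (Cons x xs)
  obtain a q' where x: "x = (a, q')" by fastforce
  from Cons.prems(2,3) x obtain r1 where step: "(r, (q, a, q'), r1) \<in> DK" "Delta q (Go a q') > 0"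
    and rest: "pos_path Delta q' xs" "dfa_steps DK r1 (trans_word q' xs) r'"
    by auto
  obtain ys where "pos_path (prod_delta Delta DK F) (q', r1) ys" "strip_dfa_states ys = xs"
    "end_state (q', r1) ys = (end_state q' xs, r')"
    using Cons.IH[OF _ rest] by blast
  with step x show ?case
    by (intro Cons.prems(1)[of "(a, (q', r1)) # ys"]) auto
qed

lemma inj_on_strip_dfa_states:
  assumes det: "\<And>r x r1 r2. (r, x, r1) \<in> DK \<Longrightarrow> (r, x, r2) \<in> DK \<Longrightarrow> r1 = r2"
  shows "inj_on strip_dfa_states {ys. pos_path (prod_delta Delta DK F) (q, r) ys}"
proof -
  have "ys = zs"
    if "pos_path (prod_delta Delta DK F) (q, r) ys" "pos_path (prod_delta Delta DK F) (q, r) zs"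
      "strip_dfa_states ys = strip_dfa_states zs" for ys zs
    using that
  proof (induction ys arbitrary: q r zs)
    case Nil
    then show ?case by simp
  next
    case (Cons y ys)
    obtain a q' r' where y: "y = (a, (q', r'))" by (metis prod.exhaust)
    from Cons.prems(3) y obtain r'' zs' where zs: "zs = (a, (q', r'')) # zs'"
      and same: "strip_dfa_states ys = strip_dfa_states zs'"
      by (cases zs) auto
    from Cons.prems(1,2) y zs have "(r, (q, a, q'), r') \<in> DK" "(r, (q, a, q'), r'') \<in> DK"
      and "pos_path (prod_delta Delta DK F) (q', r') ys" "pos_path (prod_delta Delta DK F) (q', r'') zs'"
      by (auto split: if_splits)
    with det Cons.IH same show ?case
      unfolding y zs by blast
  qed
  then show ?thesis
    by (auto intro: inj_onI)
qed

lemma strip_dfa_states_CRun_prod_delta: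
  "strip_dfa_states ` CRun (prod_delta Delta DK F) (q, r) =
     {xs \<in> CRun Delta q. trans_word q xs \<in> dfa_lang DK r F}"
proof (intro set_eqI iffI)
  fix xs
  assume "xs \<in> strip_dfa_states ` CRun (prod_delta Delta DK F) (q, r)"
  then obtain ys where xs: "xs = strip_dfa_states ys"
    and path: "pos_path (prod_delta Delta DK F) (q, r) ys"
    and stop: "prod_delta Delta DK F (end_state (q, r) ys) Stop > 0"
    by (auto simp: CRun_def)
  obtain q1 r1 where "end_state (q, r) ys = (q1, r1)" by fastforce
  with stop fst_end_state_strip_dfa_states[of q r ys]
    dfa_steps_trans_word_strip_dfa_states[OF path] pos_path_strip_dfa_states[OF path]
  show "xs \<in> {xs \<in> CRun Delta q. trans_word q xs \<in> dfa_lang DK r F}"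
    by (auto simp: xs CRun_def dfa_lang_def split: if_splits)
next
  fix xs
  assume "xs \<in> {xs \<in> CRun Delta q. trans_word q xs \<in> dfa_lang DK r F}"
  then obtain r' where path: "pos_path Delta q xs" and stop: "Delta (end_state q xs) Stop > 0"
    and "r' \<in> F" and "dfa_steps DK r (trans_word q xs) r'"
    by (auto simp: CRun_def dfa_lang_def)
  then obtain ys where "pos_path (prod_delta Delta DK F) (q, r) ys" "strip_dfa_states ys = xs"
    "end_state (q, r) ys = (end_state q xs, r')"
    by (metis lift_pos_path_prod_delta)
  with stop \<open>r' \<in> F\<close> show "xs \<in> strip_dfa_states ` CRun (prod_delta Delta DK F) (q, r)"
    by (force simp: CRun_def)
qed

lemma run_weight_prod_delta_CRun:
  assumes "ys \<in> CRun (prod_delta Delta DK F) (q, r)"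
  shows "run_weight (prod_delta Delta DK F) (q, r) ys = run_weight Delta q (strip_dfa_states ys)"
proof -
  obtain q1 r1 where end_eq: "end_state (q, r) ys = (q1, r1)" by fastforce
  with assms have "pos_path (prod_delta Delta DK F) (q, r) ys" "r1 \<in> F"
    by (auto simp: CRun_def split: if_splits)
  with end_eq show ?thesis
    using run_weight_prod_delta by fastforce
qed

theorem lemma2:
  fixes Sig :: "'s set" and Q :: "'q set" and Delta :: "'q \<Rightarrow> ('s, 'q) act \<Rightarrow> real" and q0 :: 'q
    and QK :: "'k set" and DK :: "('k \<times> ('q \<times> 's \<times> 'q) \<times> 'k) set" and qK :: 'k and F :: "'k set"
  assumes "is_SA Sig Q Delta q0"
    and "is_DFA (Q \<times> Sig \<times> Q) QK DK qK F"
  shows "P_lang Delta q0 (dfa_lang DK qK F) = L_SA (prod_delta Delta DK F) (q0, qK)"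
proof -
  let ?runs = "CRun (prod_delta Delta DK F) (q0, qK)"
  have "inj_on strip_dfa_states ?runs"
    using assms(2) inj_on_strip_dfa_states[of DK Delta F q0 qK]
    by (auto simp: is_DFA_def CRun_def intro: inj_on_subset)
  then have "P_lang Delta q0 (dfa_lang DK qK F) = (\<Sum>\<^sub>\<infinity>ys\<in>?runs. run_weight Delta q0 (strip_dfa_states ys))"
    unfolding P_lang_def strip_dfa_states_CRun_prod_delta[symmetric]
    by (simp add: infsum_reindex comp_def)
  also have "\<dots> = L_SA (prod_delta Delta DK F) (q0, qK)"
    unfolding L_SA_def by (rule infsum_cong) (simp add: run_weight_prod_delta_CRun)
  finally show ?thesis .
qed

end
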